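(* Let $A$ be a symmetric general metric space, i.e. $A(x,y)=A(y,x)$ for all $x,y$. Then: (1) every flat filter on $A$ is Cauchy; (2) for every Cauchy filter $\mathcal F$, the maps $x\mapsto\lim^+_{y\in\mathcal F}A(x,y)$ and $x\mapsto\lim^+_{y\in\mathcal F}A(y,x)$ coincide; (3) every left adjoint left module on $A$ has the same underlying map as its right adjoint; (4) every $\mathcal P_2$-flat left module on $A$ is a left adjoint module; (5) a Cauchy filter on $A$ is closed if and only if it is a minimal Cauchy filter (minimal for inclusion among Cauchy filters); (6) the preorder of closed flat filters on $A$ ordered by reverse inclusion is discrete (no two distinct comparable elements).
   Context: A general metric space $A$ is a set with $A(-,-):A\times A\to[0,\infty]$, $A(x,x)=0$, $A(x,z)\le A(x,y)+A(y,z)$. Internal hom on $[0,\infty]$: $[x,y]=\max(y-x,0)$ for finite $x,y$, $[x,\infty]=\infty$ for $x<\infty$, $[\infty,y]=0$. A left module is $M:A\to[0,\infty]$ with $M(x)\le M(y)+A(x,y)$; a right module is $N$ with $N(y)\le A(x,y)+N(x)$. A left module $M$ is a left adjoint with right adjoint the right module $N$ iff $\inf_x(M(x)+N(x))=0$ and $M(x)+N(y)\ge A(x,y)$ for all $x,y$. $M$ is $\mathcal P_2$-flat iff (F2) for every finite (possibly empty) family $(N_i)$ of right modules, $\inf_x(M(x)+\max_iN_i(x))=\max_i\inf_x(M(x)+N_i(x))$ (empty max $=0$), and (F3) for all $v\in[0,\infty]$ and right modules $N$, $\inf_x(M(x)+[v,N(x)])=[v,\inf_x(M(x)+N(x))]$.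 A filter on $A$ is a nonempty set of nonempty subsets closed under finite intersections and supersets; $\lim^+_{\mathcal F}t=\inf_{f\in\mathcal F}\sup_{x\in f}t(x)$, $\lim^-_{\mathcal F}t=\sup_{f\in\mathcal F}\inf_{x\in f}t(x)$, $M^-(\mathcal F)(x)=\lim^-_{y\in\mathcal F}A(x,y)$. Cauchy: $\inf_{f}\sup_{x,y\in f}A(x,y)=0$. Weakly flat: $\lim^+_{\mathcal F}M^-(\mathcal F)=0$. Flat: for every $\epsilon>0$ there is $f\in\mathcal F$ such that for every finite family $x_1,\dots,x_n\in f$ and every $g\in\mathcal F$ there is $y\in g$ with $A(x_i,y)\le\epsilon$ for all $i$. A weakly flat filter $\mathcal F$ is closed iff for every $f\in\mathcal F$ there is $\epsilon>0$ with $\{x:M^-(\mathcal F)(x)\le\epsilon\}\subseteq f$. *)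

theory Defs
  imports "HOL-Analysis.Analysis" "HOL-Library.Extended_Nonnegative_Real"
begin

definition gms :: "('a \<Rightarrow> 'a \<Rightarrow> ennreal) \<Rightarrow> bool" where
  "gms A \<longleftrightarrow> (\<forall>x. A x x = 0) \<and> (\<forall>x y z. A x z \<le> A x y + A y z)"

definition symmetric_gms :: "('a \<Rightarrow> 'a \<Rightarrow> ennreal) \<Rightarrow> bool" where
  "symmetric_gms A \<longleftrightarrow> (\<forall>x y. A x y = A y x)"

definition ihom :: "ennreal \<Rightarrow> ennreal \<Rightarrow> ennreal" where
  "ihom v y = (if v = \<infinity> then 0 else y - v)"

definition left_module :: "('a \<Rightarrow> 'a \<Rightarrow> ennreal) \<Rightarrow> ('a \<Rightarrow> ennreal) \<Rightarrow> bool" where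
  "left_module A M \<longleftrightarrow> (\<forall>x y. M x \<le> M y + A x y)"

definition right_module :: "('a \<Rightarrow> 'a \<Rightarrow> ennreal) \<Rightarrow> ('a \<Rightarrow> ennreal) \<Rightarrow> bool" where
  "right_module A N \<longleftrightarrow> (\<forall>x y. N y \<le> A x y + N x)"

definition adjoint_pair :: "('a \<Rightarrow> 'a \<Rightarrow> ennreal) \<Rightarrow> ('a \<Rightarrow> ennreal) \<Rightarrow> ('a \<Rightarrow> ennreal) \<Rightarrow> bool" where
  "adjoint_pair A M N \<longleftrightarrow> left_module A M \<and> right_module A N \<and>
     (INF x. M x + N x) = 0 \<and> (\<forall>x y. A x y \<le> M x + N y)"

definition left_adjoint_module :: "('a \<Rightarrow> 'a \<Rightarrow> ennreal) \<Rightarrow> ('a \<Rightarrow> ennreal) \<Rightarrow> bool" where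
  "left_adjoint_module A M \<longleftrightarrow> left_module A M \<and> (\<exists>N. adjoint_pair A M N)"

text \<open>P_2-flatness; a finite family of right modules is represented by a finite set of them
  (the maximum does not see repetitions); the empty maximum is 0.\<close>
definition P2_flat :: "('a \<Rightarrow> 'a \<Rightarrow> ennreal) \<Rightarrow> ('a \<Rightarrow> ennreal) \<Rightarrow> bool" where
  "P2_flat A M \<longleftrightarrow> left_module A M \<and>
     (\<forall>S. finite S \<and> (\<forall>N\<in>S. right_module A N) \<longrightarrow>
        (INF x. M x + (SUP N\<in>S. N x)) = (SUP N\<in>S. INF x. M x + N x)) \<and>
     (\<forall>v N. right_module A N \<longrightarrow>
        (INF x. M x + ihom v (N x)) = ihom v (INF x. M x + N x))"

text \<open>Filters: proper Isabelle filters (F \<noteq> bot). A set f belongs to the filter iff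
  eventually (\<lambda>x. x \<in> f) F. lim^+ is Limsup, lim^- is Liminf.\<close>

definition Mminus :: "('a \<Rightarrow> 'a \<Rightarrow> ennreal) \<Rightarrow> 'a filter \<Rightarrow> 'a \<Rightarrow> ennreal" where
  "Mminus A F x = Liminf F (\<lambda>y. A x y)"

definition gms_cauchy_filter :: "('a \<Rightarrow> 'a \<Rightarrow> ennreal) \<Rightarrow> 'a filter \<Rightarrow> bool" where
  "gms_cauchy_filter A F \<longleftrightarrow> F \<noteq> bot \<and>
     (INF P\<in>{P. eventually P F}. SUP x\<in>Collect P. SUP y\<in>Collect P. A x y) = 0"

definition weakly_flat_filter :: "('a \<Rightarrow> 'a \<Rightarrow> ennreal) \<Rightarrow> 'a filter \<Rightarrow> bool" where
  "weakly_flat_filter A F \<longleftrightarrow> F \<noteq> bot \<and> Limsup F (Mminus A F) = 0"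

definition flat_filter :: "('a \<Rightarrow> 'a \<Rightarrow> ennreal) \<Rightarrow> 'a filter \<Rightarrow> bool" where
  "flat_filter A F \<longleftrightarrow> F \<noteq> bot \<and>
     (\<forall>\<epsilon>::real. \<epsilon> > 0 \<longrightarrow> (\<exists>P. eventually P F \<and>
        (\<forall>xs. finite xs \<and> xs \<subseteq> Collect P \<longrightarrow>
          (\<forall>Q. eventually Q F \<longrightarrow> (\<exists>y. Q y \<and> (\<forall>x\<in>xs. A x y \<le> ennreal \<epsilon>))))))"

definition closed_filter :: "('a \<Rightarrow> 'a \<Rightarrow> ennreal) \<Rightarrow> 'a filter \<Rightarrow> bool" where
  "closed_filter A F \<longleftrightarrow> weakly_flat_filter A F \<and>
     (\<forall>P. eventually P F \<longrightarrow> (\<exists>\<epsilon>::real. \<epsilon> > 0 \<and> {x. Mminus A F x \<le> ennreal \<epsilon>} \<subseteq> Collect P))"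

text \<open>Set inclusion of filters G \<subseteq> F (as sets of subsets) is F \<le> G in Isabelle's order.\<close>
definition minimal_cauchy_filter :: "('a \<Rightarrow> 'a \<Rightarrow> ennreal) \<Rightarrow> 'a filter \<Rightarrow> bool" where
  "minimal_cauchy_filter A F \<longleftrightarrow> gms_cauchy_filter A F \<and>
     (\<forall>G. gms_cauchy_filter A G \<and> F \<le> G \<longrightarrow> G = F)"

end

theory Submission
  imports Defs
begin

text \<open>Symmetry makes two points that are close to a common third point close to each other;
  this is what makes flat filters Cauchy. It also turns an adjoint pair (M, N) into an adjoint
  pair (N, M), and M x \<le> M z + A z x \<le> 2 M z + N x with inf M = 0 gives M \<le> N, hence M = N.
  A P_2-flat M has inf M = 0 (flatness for the empty family) and satisfies
  A a b \<le> M a + M b, so it is its own right adjoint. For a Cauchy filter F the sublevel sets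
  {M^-(F) \<le> \<epsilon>} generate the least Cauchy filter contained in F, and F is closed exactly when
  F is contained in it, i.e. when F is a minimal Cauchy filter.\<close>

lemma ennreal_half_add_half: "ennreal (e / 2) + ennreal (e / 2) = ennreal e"
  by (cases "e \<ge> 0") (simp_all flip: ennreal_plus add: ennreal_neg)

lemma ennreal_eq_0_if_le_epsilon:
  fixes x :: ennreal
  assumes "\<And>e::real. 0 < e \<Longrightarrow> x \<le> ennreal e"
  shows "x = 0"
proof -
  have "x \<le> 0" by (rule ennreal_le_epsilon) (simp add: assms)
  then show ?thesis by simp
qed

lemma INF_eq_0_ennreal_less:
  fixes f :: "'a \<Rightarrow> ennreal"
  assumes "(INF x\<in>I. f x) = 0" and "0 < e"
  shows "\<exists>x\<in>I. f x < ennreal e"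
  using INF_less_iff[of f I "ennreal e"] assms by simp

lemma INF_add_self_eq_0_ennreal:
  fixes f :: "'a \<Rightarrow> ennreal"
  assumes "(INF x. f x) = 0"
  shows "(INF x. f x + f x) = 0"
proof (rule ennreal_eq_0_if_le_epsilon)
  fix e :: real assume "0 < e"
  then obtain z where "f z < ennreal (e / 2)"
    using INF_eq_0_ennreal_less[OF assms] by (meson half_gt_zero iso_tuple_UNIV_I)
  then have "f z + f z \<le> ennreal e"
    by (metis add_mono ennreal_half_add_half less_imp_le)
  then show "(INF x. f x + f x) \<le> ennreal e"
    by (rule INF_lower2[OF UNIV_I])
qed

lemma gms_zero: "gms A \<Longrightarrow> A x x = 0"
  unfolding gms_def by blast

lemma gms_triangle: "gms A \<Longrightarrow> A x z \<le> A x y + A y z"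
  unfolding gms_def by blast

lemma symmetric_gmsD: "symmetric_gms A \<Longrightarrow> A x y = A y x"
  unfolding symmetric_gms_def by blast

lemma symmetric_gms_triangle:
  assumes "gms A" and "symmetric_gms A"
  shows "A x z \<le> A x y + A z y"
  using gms_triangle[OF assms(1)] symmetric_gmsD[OF assms(2)] by metis

lemma gms_cauchy_filter_iff:
  "gms_cauchy_filter A F \<longleftrightarrow> F \<noteq> bot \<and>
    (\<forall>e::real. 0 < e \<longrightarrow> (\<exists>P. eventually P F \<and> (\<forall>x y. P x \<longrightarrow> P y \<longrightarrow> A x y \<le> ennreal e)))"
  (is "_ \<longleftrightarrow> _ \<and> ?small")
proof -
  let ?diam = "\<lambda>P. SUP x\<in>Collect P. SUP y\<in>Collect P. A x y"
  have diam_le: "?diam P \<le> c \<longleftrightarrow> (\<forall>x y. P x \<longrightarrow> P y \<longrightarrow> A x y \<le> c)" for P c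
    by (auto simp: SUP_le_iff)
  have "(INF P\<in>{P. eventually P F}. ?diam P) = 0 \<longleftrightarrow> ?small"
  proof
    assume "(INF P\<in>{P. eventually P F}. ?diam P) = 0"
    then have "\<exists>P. eventually P F \<and> ?diam P < ennreal e" if "0 < e" for e :: real
      using that INF_less_iff[of ?diam "{P. eventually P F}" "ennreal e"] by simp
    then show ?small
      using diam_le less_imp_le by metis
  next
    assume small: ?small
    show "(INF P\<in>{P. eventually P F}. ?diam P) = 0"
    proof (rule ennreal_eq_0_if_le_epsilon)
      fix e :: real assume "0 < e"
      then obtain P where "eventually P F" "\<forall>x y. P x \<longrightarrow> P y \<longrightarrow> A x y \<le> ennreal e"
        using small by blast
      then show "(INF P\<in>{P. eventually P F}. ?diam P) \<le> ennreal e"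
        by (intro INF_lower2[of P]) (auto simp only: mem_Collect_eq diam_le)
    qed
  qed
  then show ?thesis
    unfolding gms_cauchy_filter_def by blast
qed

lemma flat_filter_imp_cauchy:
  assumes "gms A" and "symmetric_gms A" and flat: "flat_filter A F"
  shows "gms_cauchy_filter A F"
  unfolding gms_cauchy_filter_iff
proof (intro conjI allI impI)
  show "F \<noteq> bot"
    using flat unfolding flat_filter_def by simp
  fix e :: real assume "0 < e"
  then obtain P where ev: "eventually P F" and common_near: "\<And>xs. finite xs \<Longrightarrow> xs \<subseteq> Collect P \<Longrightarrow>
      \<exists>y. (\<forall>x\<in>xs. A x y \<le> ennreal (e / 2))"
    using flat unfolding flat_filter_def
    by (metis (no_types, lifting) eventually_True half_gt_zero)
  have "A x z \<le> ennreal e" if "P x" and "P z" for x z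
  proof -
    obtain y where "A x y \<le> ennreal (e / 2)" "A z y \<le> ennreal (e / 2)"
      using common_near[of "{x, z}"] \<open>P x\<close> \<open>P z\<close> by auto
    then have "A x y + A z y \<le> ennreal e"
      by (metis add_mono ennreal_half_add_half)
    then show ?thesis
      using symmetric_gms_triangle[OF assms(1,2)] order_trans by blast
  qed
  then show "\<exists>P. eventually P F \<and> (\<forall>x y. P x \<longrightarrow> P y \<longrightarrow> A x y \<le> ennreal e)"
    using ev by blast
qed

lemma symmetric_left_module_iff_right_module:
  "symmetric_gms A \<Longrightarrow> left_module A M \<longleftrightarrow> right_module A M"
  unfolding left_module_def right_module_def symmetric_gms_def by (metis add.commute)

lemma adjoint_pair_swap:
  assumes "symmetric_gms A" and "adjoint_pair A M N"
  shows "adjoint_pair A N M"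
proof -
  have "A x y \<le> N x + M y" for x y
    using assms(2) symmetric_gmsD[OF assms(1), of x y] unfolding adjoint_pair_def
    by (simp add: add.commute)
  moreover have "(INF x. N x + M x) = 0"
    using assms(2) unfolding adjoint_pair_def by (simp add: add.commute)
  ultimately show ?thesis
    using assms(2) symmetric_left_module_iff_right_module[OF assms(1)]
    unfolding adjoint_pair_def by blast
qed

lemma adjoint_pair_le:
  assumes "symmetric_gms A" and adj: "adjoint_pair A M N"
  shows "M x \<le> N x"
proof (rule ennreal_le_epsilon)
  fix e :: real assume "0 < e"
  have "(INF z. M z) \<le> (INF z. M z + N z)"
    by (intro INF_mono') simp
  then have "(INF z. M z) = 0"
    using adj unfolding adjoint_pair_def by simp
  then obtain z where z: "M z + M z \<le> ennreal e"
    using INF_eq_0_ennreal_less[OF INF_add_self_eq_0_ennreal \<open>0 < e\<close>] by (auto dest: less_imp_le)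
  have "M x \<le> M z + A z x"
    using adj symmetric_gmsD[OF assms(1)] unfolding adjoint_pair_def left_module_def by metis
  also have "\<dots> \<le> M z + (M z + N x)"
    using adj unfolding adjoint_pair_def by (simp add: add_left_mono)
  also have "\<dots> \<le> N x + ennreal e"
    using z by (simp add: ac_simps add_right_mono)
  finally show "M x \<le> N x + ennreal e" .
qed

lemma adjoint_pair_eq:
  assumes "symmetric_gms A" and "adjoint_pair A M N"
  shows "M = N"
  using adjoint_pair_le[OF assms] adjoint_pair_le[OF assms(1) adjoint_pair_swap[OF assms]]
  by (auto intro: antisym)

lemma right_module_dist:
  assumes "gms A" and "symmetric_gms A"
  shows "right_module A (\<lambda>x. A x c)"
  unfolding right_module_def
proof (intro allI)
  fix x y
  show "A y c \<le> A x y + A x c"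
    using gms_triangle[OF assms(1), of y c x] symmetric_gmsD[OF assms(2), of x y] by simp
qed

lemma right_module_ihom:
  assumes "right_module A N"
  shows "right_module A (\<lambda>x. ihom v (N x))"
  unfolding right_module_def
proof (intro allI)
  fix x y
  have "N y - v \<le> (A x y + N x) - v"
    using assms unfolding right_module_def by (simp add: ennreal_minus_mono)
  also have "\<dots> \<le> A x y + (N x - v)"
    by (simp add: add_diff_le_ennreal)
  finally show "ihom v (N y) \<le> A x y + ihom v (N x)"
    unfolding ihom_def by simp
qed

lemma left_module_INF_add_dist:
  assumes "gms A" and "symmetric_gms A" and "left_module A M"
  shows "(INF x. M x + A x c) = M c"
proof (rule antisym)
  show "(INF x. M x + A x c) \<le> M c"
    using INF_lower[of c UNIV "\<lambda>x. M x + A x c"] gms_zero[OF assms(1)] by simp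
  show "M c \<le> (INF x. M x + A x c)"
  proof (rule INF_greatest)
    fix x
    show "M c \<le> M x + A x c"
      using assms(3) symmetric_gmsD[OF assms(2), of c x] unfolding left_module_def by metis
  qed
qed

lemma P2_flat_left_module: "P2_flat A M \<Longrightarrow> left_module A M"
  unfolding P2_flat_def by blast

lemma P2_flat_INF_SUP:
  "P2_flat A M \<Longrightarrow> finite S \<Longrightarrow> (\<And>N. N \<in> S \<Longrightarrow> right_module A N) \<Longrightarrow>
    (INF x. M x + (SUP N\<in>S. N x)) = (SUP N\<in>S. INF x. M x + N x)"
  unfolding P2_flat_def by blast

lemma P2_flat_INF_ihom:
  "P2_flat A M \<Longrightarrow> right_module A N \<Longrightarrow>
    (INF x. M x + ihom v (N x)) = ihom v (INF x. M x + N x)"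
  unfolding P2_flat_def by blast

lemma P2_flat_INF_eq_0: "P2_flat A M \<Longrightarrow> (INF x. M x) = 0"
  using P2_flat_INF_SUP[of A M "{}"] by (simp add: bot_ennreal)

lemma P2_flat_INF_ihom_dist_eq_0:
  assumes "gms A" and "symmetric_gms A" and flat: "P2_flat A M" and "M c \<noteq> \<infinity>"
  shows "(INF x. M x + ihom (M c) (A x c)) = 0"
proof -
  have "(INF x. M x + ihom (M c) (A x c)) = ihom (M c) (INF x. M x + A x c)"
    using P2_flat_INF_ihom[OF flat right_module_dist[OF assms(1,2)]] .
  also have "\<dots> = 0"
    using \<open>M c \<noteq> \<infinity>\<close>
    unfolding left_module_INF_add_dist[OF assms(1,2) P2_flat_left_module[OF flat]] ihom_def
    by simp
  finally show ?thesis .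
qed

text \<open>(F2) for the truncated distances to a and to b gives points x at which both
  A x a - M a and A x b - M b are small; the triangle inequality through x concludes.\<close>
lemma P2_flat_dist_le:
  assumes "gms A" and "symmetric_gms A" and flat: "P2_flat A M"
  shows "A a b \<le> M a + M b"
proof (cases "M a = \<infinity> \<or> M b = \<infinity>")
  case False
  define N where "N c x = ihom (M c) (A x c)" for c x
  have N_rm: "right_module A (N c)" for c
    unfolding N_def by (intro right_module_ihom right_module_dist assms(1,2))
  have "(INF x. M x + sup (N a x) (N b x)) = sup (INF x. M x + N a x) (INF x. M x + N b x)"
    using P2_flat_INF_SUP[OF flat, of "{N a, N b}"] N_rm by auto
  then have sup_0: "(INF x. M x + sup (N a x) (N b x)) = 0"
    using P2_flat_INF_ihom_dist_eq_0[OF assms] False unfolding N_def by simp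
  show ?thesis
  proof (rule ennreal_le_epsilon)
    fix e :: real assume "0 < e"
    then obtain x where x: "M x + sup (N a x) (N b x) < ennreal (e / 2)"
      using INF_eq_0_ennreal_less[OF sup_0] by (meson half_gt_zero iso_tuple_UNIV_I)
    have "sup (N a x) (N b x) \<le> ennreal (e / 2)"
      using x by (meson add_increasing le_less_trans less_imp_le order_refl zero_le)
    then have "A x a \<le> M a + ennreal (e / 2)" "A x b \<le> M b + ennreal (e / 2)"
      using False unfolding N_def ihom_def by (auto simp: ennreal_minus_le_iff)
    then have "A x a + A x b \<le> (M a + ennreal (e / 2)) + (M b + ennreal (e / 2))"
      by (rule add_mono)
    also have "\<dots> = M a + M b + (ennreal (e / 2) + ennreal (e / 2))"
      by (simp add: ac_simps)
    finally have "A x a + A x b \<le> M a + M b + ennreal e"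
      by (simp only: ennreal_half_add_half)
    moreover have "A a b \<le> A x a + A x b"
      using symmetric_gms_triangle[OF assms(1,2), of a b x]
        symmetric_gmsD[OF assms(2), of a x] symmetric_gmsD[OF assms(2), of b x] by simp
    ultimately show "A a b \<le> M a + M b + ennreal e"
      by (rule order_trans[rotated])
  qed
qed auto

lemma P2_flat_imp_adjoint_pair:
  assumes "gms A" and "symmetric_gms A" and flat: "P2_flat A M"
  shows "adjoint_pair A M M"
  unfolding adjoint_pair_def
  using P2_flat_left_module[OF flat] symmetric_left_module_iff_right_module[OF assms(2)]
    P2_flat_dist_le[OF assms] INF_add_self_eq_0_ennreal[OF P2_flat_INF_eq_0[OF flat]] by blast

lemma Mminus_le_if_eventually:
  "F \<noteq> bot \<Longrightarrow> eventually (\<lambda>y. A x y \<le> c) F \<Longrightarrow> Mminus A F x \<le> c"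
  unfolding Mminus_def by (rule Liminf_le)

lemma eventually_Mminus_le:
  assumes cauchy: "gms_cauchy_filter A F" and "0 < e"
  shows "eventually (\<lambda>x. Mminus A F x \<le> ennreal e) F"
proof -
  obtain P where P: "eventually P F" "\<And>x y. P x \<Longrightarrow> P y \<Longrightarrow> A x y \<le> ennreal e"
    using cauchy \<open>0 < e\<close> unfolding gms_cauchy_filter_iff by blast
  have "Mminus A F x \<le> ennreal e" if "P x" for x
    using cauchy P that unfolding gms_cauchy_filter_iff
    by (blast intro: Mminus_le_if_eventually eventually_mono)
  then show ?thesis
    using P(1) by (rule eventually_mono[rotated])
qed

text \<open>Some y with A x y close to M^-(F)(x) lies in a set of small diameter of F; the
  triangle inequality through y then bounds A x y' on the whole set.\<close>
lemma eventually_dist_le_if_Mminus_le: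
  assumes "gms A" and cauchy: "gms_cauchy_filter A F"
    and Mminus_le: "Mminus A F x \<le> ennreal r" and "0 < \<delta>"
  shows "eventually (\<lambda>y. A x y \<le> ennreal r + ennreal \<delta>) F"
proof -
  obtain P where P: "eventually P F" "\<And>y y'. P y \<Longrightarrow> P y' \<Longrightarrow> A y y' \<le> ennreal (\<delta> / 2)"
    using cauchy \<open>0 < \<delta>\<close> unfolding gms_cauchy_filter_iff by (meson half_gt_zero)
  have "(INF y\<in>Collect P. A x y) \<le> Mminus A F x"
    unfolding Mminus_def Liminf_def using P(1) by (intro SUP_upper) auto
  also have "\<dots> < ennreal r + ennreal (\<delta> / 2)"
    using Mminus_le \<open>0 < \<delta>\<close> by (simp add: le_less_trans)
  finally obtain y where y: "P y" "A x y < ennreal r + ennreal (\<delta> / 2)"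
    by (auto simp: INF_less_iff)
  have "A x y' \<le> ennreal r + ennreal \<delta>" if "P y'" for y'
  proof -
    have "A x y' \<le> A x y + A y y'"
      by (rule gms_triangle[OF assms(1)])
    also have "\<dots> \<le> (ennreal r + ennreal (\<delta> / 2)) + ennreal (\<delta> / 2)"
      using y P(2) that by (intro add_mono) auto
    also have "\<dots> = ennreal r + ennreal \<delta>"
      by (simp only: add.assoc ennreal_half_add_half)
    finally show ?thesis .
  qed
  then show ?thesis
    using P(1) by (rule eventually_mono[rotated])
qed

lemma cauchy_imp_weakly_flat:
  assumes cauchy: "gms_cauchy_filter A F"
  shows "weakly_flat_filter A F"
proof -
  have "Limsup F (Mminus A F) = 0"
    using eventually_Mminus_le[OF cauchy]
    by (intro ennreal_eq_0_if_le_epsilon Limsup_bounded)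
  then show ?thesis
    using cauchy unfolding weakly_flat_filter_def gms_cauchy_filter_def by blast
qed

definition Mminus_sublevel_filter :: "('a \<Rightarrow> 'a \<Rightarrow> ennreal) \<Rightarrow> 'a filter \<Rightarrow> 'a filter" where
  "Mminus_sublevel_filter A F =
    (INF e\<in>{0::real<..}. principal {x. Mminus A F x \<le> ennreal e})"

lemma eventually_Mminus_sublevel_filter:
  "eventually P (Mminus_sublevel_filter A F) \<longleftrightarrow>
    (\<exists>e>0. \<forall>x. Mminus A F x \<le> ennreal e \<longrightarrow> P x)"
proof -
  have "eventually P (Mminus_sublevel_filter A F) \<longleftrightarrow>
      (\<exists>e\<in>{0::real<..}. eventually P (principal {x. Mminus A F x \<le> ennreal e}))"
    unfolding Mminus_sublevel_filter_def
  proof (rule eventually_INF_base)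
    fix a b :: real assume "a \<in> {0<..}" "b \<in> {0<..}"
    then show "\<exists>c\<in>{0<..}. principal {x. Mminus A F x \<le> ennreal c} \<le>
        inf (principal {x. Mminus A F x \<le> ennreal a}) (principal {x. Mminus A F x \<le> ennreal b})"
      by (intro bexI[of _ "min a b"]) (auto simp: inf_principal intro: order_trans[OF _ ennreal_leI])
  qed auto
  then show ?thesis
    by (auto simp: eventually_principal)
qed

lemma le_Mminus_sublevel_filter:
  "gms_cauchy_filter A F \<Longrightarrow> F \<le> Mminus_sublevel_filter A F"
  unfolding le_filter_def eventually_Mminus_sublevel_filter
  by (blast intro: eventually_mono eventually_Mminus_le)

lemma cauchy_Mminus_sublevel_filter:
  assumes "gms A" and "symmetric_gms A" and cauchy: "gms_cauchy_filter A F"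
  shows "gms_cauchy_filter A (Mminus_sublevel_filter A F)"
  unfolding gms_cauchy_filter_iff
proof (intro conjI allI impI)
  have "F \<noteq> bot"
    using cauchy unfolding gms_cauchy_filter_def by blast
  then show "Mminus_sublevel_filter A F \<noteq> bot"
    using le_Mminus_sublevel_filter[OF cauchy] by (auto simp: bot_unique)
  fix e :: real assume "0 < e"
  let ?D = "\<lambda>x. Mminus A F x \<le> ennreal (e / 4)"
  have "eventually ?D (Mminus_sublevel_filter A F)"
    unfolding eventually_Mminus_sublevel_filter using \<open>0 < e\<close> by (intro exI[of _ "e / 4"]) auto
  moreover have "A x z \<le> ennreal e" if "?D x" and "?D z" for x z
  proof -
    have near: "eventually (\<lambda>y. A w y \<le> ennreal (e / 2)) F" if "?D w" for w
      using eventually_dist_le_if_Mminus_le[OF assms(1) cauchy that, of "e / 4"] \<open>0 < e\<close>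
      by (simp flip: ennreal_plus)
    obtain y where "A x y \<le> ennreal (e / 2)" "A z y \<le> ennreal (e / 2)"
      using eventually_happens'[OF \<open>F \<noteq> bot\<close> eventually_conj[OF near near]] \<open>?D x\<close> \<open>?D z\<close>
      by blast
    then have "A x y + A z y \<le> ennreal e"
      by (metis add_mono ennreal_half_add_half)
    then show ?thesis
      using symmetric_gms_triangle[OF assms(1,2)] order_trans by blast
  qed
  ultimately show "\<exists>P. eventually P (Mminus_sublevel_filter A F) \<and>
      (\<forall>x y. P x \<longrightarrow> P y \<longrightarrow> A x y \<le> ennreal e)"
    by blast
qed

lemma cauchy_le_Mminus_sublevel_filter:
  assumes "F \<noteq> bot" and cauchy: "gms_cauchy_filter A H" and "F \<le> H"
  shows "H \<le> Mminus_sublevel_filter A F"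
  unfolding le_filter_def eventually_Mminus_sublevel_filter
proof (intro allI impI)
  fix P assume "\<exists>e>0. \<forall>x. Mminus A F x \<le> ennreal e \<longrightarrow> P x"
  then obtain e :: real where "0 < e" and sublevel: "\<And>x. Mminus A F x \<le> ennreal e \<Longrightarrow> P x"
    by blast
  obtain Q where Q: "eventually Q H" "\<And>x y. Q x \<Longrightarrow> Q y \<Longrightarrow> A x y \<le> ennreal e"
    using cauchy \<open>0 < e\<close> unfolding gms_cauchy_filter_iff by blast
  have "eventually Q F"
    using \<open>F \<le> H\<close> Q(1) by (rule filter_leD)
  have "P x" if "Q x" for x
    using Q(2)[OF that] \<open>eventually Q F\<close>
    by (intro sublevel Mminus_le_if_eventually[OF \<open>F \<noteq> bot\<close>]) (rule eventually_mono)
  then show "eventually P H"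
    using Q(1) by (rule eventually_mono[rotated])
qed

lemma closed_filter_iff_le_Mminus_sublevel_filter:
  "closed_filter A F \<longleftrightarrow> weakly_flat_filter A F \<and> Mminus_sublevel_filter A F \<le> F"
  unfolding closed_filter_def le_filter_def eventually_Mminus_sublevel_filter by blast

lemma cauchy_closed_iff_minimal:
  assumes "gms A" and "symmetric_gms A" and cauchy: "gms_cauchy_filter A F"
  shows "closed_filter A F \<longleftrightarrow> minimal_cauchy_filter A F"
proof
  assume "closed_filter A F"
  then have "H \<le> F" if "gms_cauchy_filter A H" and "F \<le> H" for H
    using cauchy_le_Mminus_sublevel_filter[OF _ that] cauchy
    unfolding closed_filter_iff_le_Mminus_sublevel_filter gms_cauchy_filter_def
    by (blast intro: order_trans)
  then show "minimal_cauchy_filter A F"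
    using cauchy unfolding minimal_cauchy_filter_def by (blast intro: antisym)
next
  assume "minimal_cauchy_filter A F"
  then have "Mminus_sublevel_filter A F = F"
    using cauchy_Mminus_sublevel_filter[OF assms] le_Mminus_sublevel_filter[OF cauchy]
    unfolding minimal_cauchy_filter_def by blast
  then show "closed_filter A F"
    unfolding closed_filter_iff_le_Mminus_sublevel_filter
    using cauchy_imp_weakly_flat[OF cauchy] by simp
qed

theorem mainTheorem17:
  fixes A :: "'a \<Rightarrow> 'a \<Rightarrow> ennreal"
  assumes "gms A" and "symmetric_gms A"
  shows "(\<forall>F. flat_filter A F \<longrightarrow> gms_cauchy_filter A F)
    \<and> (\<forall>F. gms_cauchy_filter A F \<longrightarrow>
          (\<lambda>x. Limsup F (\<lambda>y. A x y)) = (\<lambda>x. Limsup F (\<lambda>y. A y x)))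
    \<and> (\<forall>M N. adjoint_pair A M N \<longrightarrow> M = N)
    \<and> (\<forall>M. P2_flat A M \<longrightarrow> left_adjoint_module A M)
    \<and> (\<forall>F. gms_cauchy_filter A F \<longrightarrow> (closed_filter A F \<longleftrightarrow> minimal_cauchy_filter A F))
    \<and> (\<forall>F G. flat_filter A F \<and> closed_filter A F \<and> flat_filter A G \<and> closed_filter A G
          \<and> F \<le> G \<longrightarrow> F = G)"
proof (intro conjI allI impI)
  show "\<And>F. flat_filter A F \<Longrightarrow> gms_cauchy_filter A F"
    by (rule flat_filter_imp_cauchy[OF assms])
  show "\<And>F. gms_cauchy_filter A F \<Longrightarrow>
      (\<lambda>x. Limsup F (\<lambda>y. A x y)) = (\<lambda>x. Limsup F (\<lambda>y. A y x))"
    using symmetric_gmsD[OF assms(2)] by simp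
  show "\<And>M N. adjoint_pair A M N \<Longrightarrow> M = N"
    by (rule adjoint_pair_eq[OF assms(2)])
  show "\<And>M. P2_flat A M \<Longrightarrow> left_adjoint_module A M"
    unfolding left_adjoint_module_def using P2_flat_left_module P2_flat_imp_adjoint_pair[OF assms]
    by blast
  show "\<And>F. gms_cauchy_filter A F \<Longrightarrow> closed_filter A F \<longleftrightarrow> minimal_cauchy_filter A F"
    by (rule cauchy_closed_iff_minimal[OF assms])
  fix F G
  assume "flat_filter A F \<and> closed_filter A F \<and> flat_filter A G \<and> closed_filter A G \<and> F \<le> G"
  then show "F = G"
    using flat_filter_imp_cauchy[OF assms] cauchy_closed_iff_minimal[OF assms]
    unfolding minimal_cauchy_filter_def by metis
qed

end
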